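(* Let $p$ be a prime, $m\ge 1$, $t\ge 1$ integers, $R^t=\mathbb{F}_{p^m}[u]/\langle u^t\rangle$, let $\omega(x)\in R^t[x]$ and $R^{t,\omega}=R^t[x]/\langle\omega(x)\rangle$. Then for every ideal $I$ of $R^{t,\omega}$ there exists $a\in I$ such that $$I=\langle a\rangle+u(I:u).$$
   Context: For an ideal $I$ of a commutative ring $R$ and $a\in R$, $(I:a)=\{x\in R: xa\in I\}$. *)

theory Defs
  imports "HOL-Algebra.UnivPoly" "HOL-Algebra.QuotRing" "HOL-Computational_Algebra.Primes"
begin

definition colon_ideal :: "('a, 'b) ring_scheme \<Rightarrow> 'a set \<Rightarrow> 'a \<Rightarrow> 'a set" where
  "colon_ideal R I a = {x \<in> carrier R. x \<otimes>\<^bsub>R\<^esub> a \<in> I}"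

text \<open>R^t = K[u]/(u^t), with u the indeterminate of UP K.\<close>
definition Rt :: "('a, 'b) ring_scheme \<Rightarrow> nat \<Rightarrow> (nat \<Rightarrow> 'a) set ring" where
  "Rt K t = UP K Quot (PIdl\<^bsub>UP K\<^esub> (monom (UP K) \<one>\<^bsub>K\<^esub> t))"

definition u_Rt :: "('a, 'b) ring_scheme \<Rightarrow> nat \<Rightarrow> (nat \<Rightarrow> 'a) set" where
  "u_Rt K t = (PIdl\<^bsub>UP K\<^esub> (monom (UP K) \<one>\<^bsub>K\<^esub> t)) +>\<^bsub>UP K\<^esub> (monom (UP K) \<one>\<^bsub>K\<^esub> 1)"

definition Rtw :: "('a, 'b) ring_scheme \<Rightarrow> nat \<Rightarrow> (nat \<Rightarrow> (nat \<Rightarrow> 'a) set)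
    \<Rightarrow> (nat \<Rightarrow> (nat \<Rightarrow> 'a) set) set ring" where
  "Rtw K t \<omega> = UP (Rt K t) Quot (PIdl\<^bsub>UP (Rt K t)\<^esub> \<omega>)"

definition u_Rtw :: "('a, 'b) ring_scheme \<Rightarrow> nat \<Rightarrow> (nat \<Rightarrow> (nat \<Rightarrow> 'a) set)
    \<Rightarrow> (nat \<Rightarrow> (nat \<Rightarrow> 'a) set) set" where
  "u_Rtw K t \<omega> = (PIdl\<^bsub>UP (Rt K t)\<^esub> \<omega>) +>\<^bsub>UP (Rt K t)\<^esub> (monom (UP (Rt K t)) (u_Rt K t) 0)"

end

(* Coefficientwise evaluation at u = 0 maps R^t[x] onto F[x], with kernel u R^t[x].  As F[x] is
   a principal ideal domain, the image of an ideal J of R^t[x] is generated by the image of some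
   a in J, so every f in J has the form s a + u h, and then u h = f - s a lies in J, i.e. h lies
   in (J : u).  The property "J is contained in <a> + <u> for some a in J" passes to every quotient
   of R^t[x], in particular to R^{t,omega}, where it yields I = <a> + u (I : u). *)

theory Submission
  imports Defs
begin

lemma (in ring) cgenideal_add_cgenideal:
  "PIdl a <+>\<^bsub>R\<^esub> PIdl b = {x \<otimes> a \<oplus> y \<otimes> b | x y. x \<in> carrier R \<and> y \<in> carrier R}"
  unfolding set_add_def' cgenideal_def by blast

lemma (in ring_hom_ring) surj_ideal_image:
  assumes surj: "h ` carrier R = carrier S" and I: "ideal I R"
  shows "ideal (h ` I) S"
proof (rule idealI)
  interpret I: ideal I R by fact
  show "ring S" by (rule S.ring_axioms)
  show "subgroup (h ` I) (add_monoid S)"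
    by (rule img_is_add_subgroup) (rule I.a_subgroup)
  fix a x assume a: "a \<in> h ` I" and x: "x \<in> carrier S"
  then obtain b y where b: "b \<in> I" "a = h b" and y: "y \<in> carrier R" "x = h y"
    using surj by (metis imageE)
  then show "x \<otimes>\<^bsub>S\<^esub> a \<in> h ` I" and "a \<otimes>\<^bsub>S\<^esub> x \<in> h ` I"
    using I.I_l_closed I.I_r_closed I.Icarr by (metis hom_mult image_eqI)+
qed

lemma (in ring_hom_ring) the_elem_image_rcos:
  assumes N: "ideal N R" and ker: "N \<subseteq> a_kernel R S h" and x: "x \<in> carrier R"
  shows "the_elem (h ` (N +>\<^bsub>R\<^esub> x)) = h x"
proof -
  interpret N: ideal N R by fact
  have "h ` (N +>\<^bsub>R\<^esub> x) = {h x}"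
  proof
    show "h ` (N +>\<^bsub>R\<^esub> x) \<subseteq> {h x}"
      using ker x N.Icarr unfolding a_r_coset_def' a_kernel_def' by auto
    show "{h x} \<subseteq> h ` (N +>\<^bsub>R\<^esub> x)"
      using N.a_rcos_self[OF x] by blast
  qed
  then show ?thesis by simp
qed

lemma (in ring_hom_ring) the_elem_image_ring_hom:
  assumes N: "ideal N R" and ker: "N \<subseteq> a_kernel R S h"
  shows "(\<lambda>X. the_elem (h ` X)) \<in> ring_hom (R Quot N) S"
proof -
  interpret N: ideal N R by fact
  interpret \<pi>: ring_hom_ring R "R Quot N" "(+>\<^bsub>R\<^esub>) N" by (rule N.rcos_ring_hom_ring)
  have carr: "carrier (R Quot N) = (+>\<^bsub>R\<^esub>) N ` carrier R"
    unfolding FactRing_def A_RCOSETS_def' by auto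
  note lift = the_elem_image_rcos[OF N ker]
  show ?thesis
  proof (rule ring_hom_memI)
    fix X assume "X \<in> carrier (R Quot N)"
    then show "the_elem (h ` X) \<in> carrier S" using carr lift by auto
  next
    fix X Y assume "X \<in> carrier (R Quot N)" "Y \<in> carrier (R Quot N)"
    then obtain x y where x: "x \<in> carrier R" "X = N +>\<^bsub>R\<^esub> x" and y: "y \<in> carrier R" "Y = N +>\<^bsub>R\<^esub> y"
      using carr by auto
    have mult: "X \<otimes>\<^bsub>R Quot N\<^esub> Y = N +>\<^bsub>R\<^esub> (x \<otimes>\<^bsub>R\<^esub> y)"
      and add: "X \<oplus>\<^bsub>R Quot N\<^esub> Y = N +>\<^bsub>R\<^esub> (x \<oplus>\<^bsub>R\<^esub> y)"
      using x y by simp_all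
    show "the_elem (h ` (X \<otimes>\<^bsub>R Quot N\<^esub> Y)) = the_elem (h ` X) \<otimes>\<^bsub>S\<^esub> the_elem (h ` Y)"
      unfolding mult using x y by (simp add: lift del: \<pi>.hom_mult)
    show "the_elem (h ` (X \<oplus>\<^bsub>R Quot N\<^esub> Y)) = the_elem (h ` X) \<oplus>\<^bsub>S\<^esub> the_elem (h ` Y)"
      unfolding add using x y by (simp add: lift del: \<pi>.hom_add)
  next
    have one: "\<one>\<^bsub>R Quot N\<^esub> = N +>\<^bsub>R\<^esub> \<one>\<^bsub>R\<^esub>" by simp
    show "the_elem (h ` \<one>\<^bsub>R Quot N\<^esub>) = \<one>\<^bsub>S\<^esub>" unfolding one lift[OF R.one_closed] by simp
  qed
qed

definition principal_mod :: "('a, 'b) ring_scheme \<Rightarrow> 'a \<Rightarrow> 'a set \<Rightarrow> bool" where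
  "principal_mod R u I \<longleftrightarrow> (\<exists>a\<in>I. I \<subseteq> PIdl\<^bsub>R\<^esub> a <+>\<^bsub>R\<^esub> PIdl\<^bsub>R\<^esub> u)"

lemma (in ring_hom_cring) principal_mod_if_principal_image:
  assumes surj: "h ` carrier R = carrier S" and S: "\<And>J. ideal J S \<Longrightarrow> principalideal J S"
    and ker: "a_kernel R S h \<subseteq> PIdl\<^bsub>R\<^esub> u" and I: "ideal I R"
  shows "principal_mod R u I"
proof -
  interpret I: ideal I R by fact
  obtain g where "g \<in> carrier S" and g: "h ` I = PIdl\<^bsub>S\<^esub> g"
    using principalideal.generate[OF S[OF ring.surj_ideal_image[OF surj I]]]
    by (auto simp: S.cgenideal_eq_genideal)
  then obtain a where a: "a \<in> I" and "h a = g"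
    using S.cgenideal_self by (metis imageE)
  then have ha: "h ` I = PIdl\<^bsub>S\<^esub> (h a)" using g by simp
  have "f \<in> PIdl\<^bsub>R\<^esub> a <+>\<^bsub>R\<^esub> PIdl\<^bsub>R\<^esub> u" if f: "f \<in> I" for f
  proof -
    have "h f \<in> PIdl\<^bsub>S\<^esub> (h a)" using f ha by blast
    then obtain q where "q \<in> carrier S" and "h f = q \<otimes>\<^bsub>S\<^esub> h a"
      unfolding cgenideal_def by blast
    then obtain s where s: "s \<in> carrier R" and hf: "h f = h s \<otimes>\<^bsub>S\<^esub> h a"
      using surj by (metis imageE)
    have fc: "f \<in> carrier R" and ac: "a \<in> carrier R" using f a I.Icarr by auto
    have "h (f \<ominus>\<^bsub>R\<^esub> s \<otimes>\<^bsub>R\<^esub> a) = \<zero>\<^bsub>S\<^esub>"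
      using fc s ac hf by (simp add: R.minus_eq S.minus_eq S.r_neg)
    then have "f \<ominus>\<^bsub>R\<^esub> s \<otimes>\<^bsub>R\<^esub> a \<in> PIdl\<^bsub>R\<^esub> u"
      using ker fc s ac unfolding a_kernel_def' by auto
    then obtain y where y: "y \<in> carrier R" and diff: "f \<ominus>\<^bsub>R\<^esub> s \<otimes>\<^bsub>R\<^esub> a = y \<otimes>\<^bsub>R\<^esub> u"
      unfolding cgenideal_def by blast
    have "f = s \<otimes>\<^bsub>R\<^esub> a \<oplus>\<^bsub>R\<^esub> (f \<ominus>\<^bsub>R\<^esub> s \<otimes>\<^bsub>R\<^esub> a)"
      using fc s ac by algebra
    then have "f = s \<otimes>\<^bsub>R\<^esub> a \<oplus>\<^bsub>R\<^esub> y \<otimes>\<^bsub>R\<^esub> u" unfolding diff .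
    then show ?thesis using s y unfolding R.cgenideal_add_cgenideal by blast
  qed
  then show ?thesis using a unfolding principal_mod_def by blast
qed

lemma (in ring_hom_cring) principal_mod_image:
  assumes surj: "h ` carrier R = carrier S" and u: "u \<in> carrier R" and I: "ideal I S"
    and preimage: "principal_mod R u {r \<in> carrier R. h r \<in> I}"
  shows "principal_mod S (h u) I"
proof -
  interpret I: ideal I S by fact
  obtain a where a: "a \<in> carrier R" "h a \<in> I"
    and cover: "{r \<in> carrier R. h r \<in> I} \<subseteq> PIdl\<^bsub>R\<^esub> a <+>\<^bsub>R\<^esub> PIdl\<^bsub>R\<^esub> u"
    using preimage unfolding principal_mod_def by blast
  have "b \<in> PIdl\<^bsub>S\<^esub> (h a) <+>\<^bsub>S\<^esub> PIdl\<^bsub>S\<^esub> (h u)" if b: "b \<in> I" for b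
  proof -
    obtain f where f: "f \<in> carrier R" "b = h f" using b I.Icarr surj by blast
    then have "f \<in> PIdl\<^bsub>R\<^esub> a <+>\<^bsub>R\<^esub> PIdl\<^bsub>R\<^esub> u" using b cover by blast
    then obtain s y where "s \<in> carrier R" "y \<in> carrier R" "f = s \<otimes>\<^bsub>R\<^esub> a \<oplus>\<^bsub>R\<^esub> y \<otimes>\<^bsub>R\<^esub> u"
      unfolding R.cgenideal_add_cgenideal by blast
    then have "b = h s \<otimes>\<^bsub>S\<^esub> h a \<oplus>\<^bsub>S\<^esub> h y \<otimes>\<^bsub>S\<^esub> h u" and "h s \<in> carrier S" "h y \<in> carrier S"
      using f a u by simp_all
    then show ?thesis unfolding S.cgenideal_add_cgenideal by blast
  qed
  then show ?thesis using a unfolding principal_mod_def by blast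
qed

lemma (in cring) principal_mod_colon_decomposition:
  assumes I: "ideal I R" and u: "u \<in> carrier R" and "principal_mod R u I"
  shows "\<exists>a\<in>I. I = PIdl a <+>\<^bsub>R\<^esub> {u \<otimes> y | y. y \<in> colon_ideal R I u}"
proof -
  interpret I: ideal I R by fact
  obtain a where a: "a \<in> I" and cover: "I \<subseteq> PIdl a <+>\<^bsub>R\<^esub> PIdl u"
    using \<open>principal_mod R u I\<close> unfolding principal_mod_def by blast
  have ac: "a \<in> carrier R" using a I.Icarr by blast
  have "I \<subseteq> PIdl a <+>\<^bsub>R\<^esub> {u \<otimes> y | y. y \<in> colon_ideal R I u}"
  proof
    fix b assume b: "b \<in> I"
    then obtain s y where s: "s \<in> carrier R" and y: "y \<in> carrier R" and bsy: "b = s \<otimes> a \<oplus> y \<otimes> u"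
      using cover unfolding cgenideal_add_cgenideal by blast
    have "y \<otimes> u = b \<ominus> s \<otimes> a"
      using s y u ac unfolding bsy by algebra
    also have "\<dots> \<in> I"
      using b a s by (simp add: minus_eq I.a_closed I.a_inv_closed I.I_l_closed)
    finally have "y \<in> colon_ideal R I u" unfolding colon_ideal_def using y by blast
    moreover have "s \<otimes> a \<in> PIdl a" using s unfolding cgenideal_def by blast
    ultimately show "b \<in> PIdl a <+>\<^bsub>R\<^esub> {u \<otimes> y | y. y \<in> colon_ideal R I u}"
      unfolding set_add_def' bsy using y u by (auto simp: m_comm)
  qed
  moreover have "PIdl a <+>\<^bsub>R\<^esub> {u \<otimes> y | y. y \<in> colon_ideal R I u} \<subseteq> I"
  proof -
    have "PIdl a \<subseteq> I" using cgenideal_minimal[OF I a] .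
    moreover have "{u \<otimes> y | y. y \<in> colon_ideal R I u} \<subseteq> I"
      unfolding colon_ideal_def using u by (auto simp: m_comm)
    ultimately show ?thesis unfolding set_add_def' by (blast intro: I.a_closed)
  qed
  ultimately have "I = PIdl a <+>\<^bsub>R\<^esub> {u \<otimes> y | y. y \<in> colon_ideal R I u}" ..
  then show ?thesis using a by blast
qed

lemma UP_field_division:
  assumes K: "field K" and f: "f \<in> carrier (UP K)"
    and g: "g \<in> carrier (UP K)" and g0: "g \<noteq> \<zero>\<^bsub>UP K\<^esub>"
  shows "\<exists>q\<in>carrier (UP K). \<exists>r\<in>carrier (UP K).
           f = g \<otimes>\<^bsub>UP K\<^esub> q \<oplus>\<^bsub>UP K\<^esub> r \<and> (r = \<zero>\<^bsub>UP K\<^esub> \<or> deg K r < deg K g)"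
proof -
  interpret K: field K by fact
  interpret UP_domain K "UP K" by (simp add: UP_domain_def K.domain_axioms)
  obtain q r k where q: "q \<in> carrier (UP K)" and r: "r \<in> carrier (UP K)"
    and div: "lcoeff g [^]\<^bsub>K\<^esub> (k::nat) \<odot>\<^bsub>UP K\<^esub> f = g \<otimes>\<^bsub>UP K\<^esub> q \<oplus>\<^bsub>UP K\<^esub> r"
    and rdeg: "r = \<zero>\<^bsub>UP K\<^esub> \<or> deg K r < deg K g"
    using long_div_theorem[OF g f g0] by blast
  \<comment> \<open>\<open>long_div_theorem\<close> is pseudo-division; over a field the factor \<open>c\<close> is a unit.\<close>
  define c where "c = lcoeff g [^]\<^bsub>K\<^esub> k"
  have "lcoeff g \<in> carrier K - {\<zero>\<^bsub>K\<^esub>}" using g g0 lcoeff_nonzero2 by auto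
  then have "c \<in> carrier K - {\<zero>\<^bsub>K\<^esub>}" unfolding c_def by (induct k) (auto simp: K.integral_iff)
  then have c: "c \<in> Units K" by (simp add: K.field_Units)
  then have ic: "inv\<^bsub>K\<^esub> c \<in> carrier K" and icc: "inv\<^bsub>K\<^esub> c \<otimes>\<^bsub>K\<^esub> c = \<one>\<^bsub>K\<^esub>"
    by simp_all
  have "f = (inv\<^bsub>K\<^esub> c \<otimes>\<^bsub>K\<^esub> c) \<odot>\<^bsub>UP K\<^esub> f" using f icc by simp
  also have "\<dots> = inv\<^bsub>K\<^esub> c \<odot>\<^bsub>UP K\<^esub> (c \<odot>\<^bsub>UP K\<^esub> f)"
    using f c ic by (intro UP_smult_assoc1) auto
  also have "\<dots> = inv\<^bsub>K\<^esub> c \<odot>\<^bsub>UP K\<^esub> (g \<otimes>\<^bsub>UP K\<^esub> q \<oplus>\<^bsub>UP K\<^esub> r)"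
    unfolding c_def div ..
  also have "\<dots> = g \<otimes>\<^bsub>UP K\<^esub> (inv\<^bsub>K\<^esub> c \<odot>\<^bsub>UP K\<^esub> q) \<oplus>\<^bsub>UP K\<^esub> inv\<^bsub>K\<^esub> c \<odot>\<^bsub>UP K\<^esub> r"
    using g q r ic by (simp add: UP_smult_r_distr UP_smult_assoc2[symmetric] m_comm[of g])
  finally have "f = g \<otimes>\<^bsub>UP K\<^esub> (inv\<^bsub>K\<^esub> c \<odot>\<^bsub>UP K\<^esub> q) \<oplus>\<^bsub>UP K\<^esub> inv\<^bsub>K\<^esub> c \<odot>\<^bsub>UP K\<^esub> r" .
  moreover have "inv\<^bsub>K\<^esub> c \<odot>\<^bsub>UP K\<^esub> r = \<zero>\<^bsub>UP K\<^esub> \<or> deg K (inv\<^bsub>K\<^esub> c \<odot>\<^bsub>UP K\<^esub> r) < deg K g"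
    using rdeg r ic deg_smult_decr[of "inv\<^bsub>K\<^esub> c" r] by auto
  moreover have "inv\<^bsub>K\<^esub> c \<odot>\<^bsub>UP K\<^esub> q \<in> carrier (UP K)" "inv\<^bsub>K\<^esub> c \<odot>\<^bsub>UP K\<^esub> r \<in> carrier (UP K)"
    using q r ic by simp_all
  ultimately show ?thesis by blast
qed

lemma UP_field_principalideal:
  assumes K: "field K" and J: "ideal J (UP K)"
  shows "principalideal J (UP K)"
proof -
  interpret K: field K by fact
  interpret UP_domain K "UP K" by (simp add: UP_domain_def K.domain_axioms)
  interpret J: ideal J "UP K" by fact
  have "\<exists>g\<in>carrier (UP K). J = PIdl\<^bsub>UP K\<^esub> g"
  proof (cases "J = {\<zero>\<^bsub>UP K\<^esub>}")
    case True
    then show ?thesis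
      by (intro bexI[of _ "\<zero>\<^bsub>UP K\<^esub>"]) (auto simp: cgenideal_def intro!: exI[of _ "\<zero>\<^bsub>UP K\<^esub>"])
  next
    case False
    then obtain f where "f \<in> J" "f \<noteq> \<zero>\<^bsub>UP K\<^esub>" using J.zero_closed by blast
    then obtain g where g: "g \<in> J" "g \<noteq> \<zero>\<^bsub>UP K\<^esub>"
      and min: "\<And>h. h \<in> J \<Longrightarrow> h \<noteq> \<zero>\<^bsub>UP K\<^esub> \<Longrightarrow> deg K g \<le> deg K h"
      using ex_has_least_nat[of "\<lambda>h. h \<in> J \<and> h \<noteq> \<zero>\<^bsub>UP K\<^esub>" f "deg K"] by blast
    have gc: "g \<in> carrier (UP K)" using g J.Icarr by blast
    have "J \<subseteq> PIdl\<^bsub>UP K\<^esub> g"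
    proof
      fix f assume f: "f \<in> J"
      then have fc: "f \<in> carrier (UP K)" using J.Icarr by blast
      obtain q r where q: "q \<in> carrier (UP K)" and r: "r \<in> carrier (UP K)"
        and fqr: "f = g \<otimes>\<^bsub>UP K\<^esub> q \<oplus>\<^bsub>UP K\<^esub> r" and rdeg: "r = \<zero>\<^bsub>UP K\<^esub> \<or> deg K r < deg K g"
        using UP_field_division[OF K fc gc g(2)] by blast
      have "r = f \<ominus>\<^bsub>UP K\<^esub> g \<otimes>\<^bsub>UP K\<^esub> q" using gc q r unfolding fqr by algebra
      also have "\<dots> \<in> J"
        using f g q by (simp add: minus_eq J.a_closed J.a_inv_closed J.I_r_closed)
      finally have "r = \<zero>\<^bsub>UP K\<^esub>" using rdeg min by fastforce
      then have "f = q \<otimes>\<^bsub>UP K\<^esub> g" using fqr gc q by (simp add: m_comm)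
      then show "f \<in> PIdl\<^bsub>UP K\<^esub> g" using q unfolding cgenideal_def by blast
    qed
    then show ?thesis using cgenideal_minimal[OF J g(1)] gc by blast
  qed
  then show ?thesis using J by (auto intro: principalidealI simp: cgenideal_eq_genideal)
qed

lemma coeff_UP_apply: "p \<in> carrier (UP R) \<Longrightarrow> coeff (UP R) p n = p n"
  by (simp add: UP_def)

lemma UP_carrier_if_vanishes_with:
  assumes p: "p \<in> carrier (UP S)" and q: "\<And>n. q n \<in> carrier R"
    and zero: "\<And>n. p n = \<zero>\<^bsub>S\<^esub> \<Longrightarrow> q n = \<zero>\<^bsub>R\<^esub>"
  shows "q \<in> carrier (UP R)"
proof -
  obtain m where "bound \<zero>\<^bsub>S\<^esub> m p" using p by (auto simp: UP_def up_def)
  then have "bound \<zero>\<^bsub>R\<^esub> m q" using zero unfolding bound_def by blast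
  then show ?thesis using q by (auto simp: UP_def)
qed

lemma UP_coeffwise_choice:
  assumes R: "ring R" and p: "p \<in> carrier (UP S)"
    and ex: "\<And>n. \<exists>c\<in>carrier R. Q n c" and zero: "\<And>n. p n = \<zero>\<^bsub>S\<^esub> \<Longrightarrow> Q n \<zero>\<^bsub>R\<^esub>"
  shows "\<exists>q\<in>carrier (UP R). \<forall>n. Q n (q n)"
proof -
  define q where "q n = (if p n = \<zero>\<^bsub>S\<^esub> then \<zero>\<^bsub>R\<^esub> else (SOME c. c \<in> carrier R \<and> Q n c))" for n
  have "q n \<in> carrier R \<and> Q n (q n)" for n
    using someI_ex[OF ex[of n, unfolded Bex_def]] zero[of n] ring.ring_simprules(2)[OF R]
    unfolding q_def by auto
  moreover have "q \<in> carrier (UP R)"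
    by (rule UP_carrier_if_vanishes_with[OF p]) (use calculation in \<open>auto simp: q_def\<close>)
  ultimately show ?thesis by blast
qed

lemma (in UP_ring) coeff_0_ring_hom_ring: "ring_hom_ring P R (\<lambda>p. coeff P p 0)"
  by (intro ring_hom_ringI2 UP_ring R.ring_axioms ring_hom_memI) simp_all

lemma (in UP_ring) cgenideal_X_pow_subset_kernel_coeff_0:
  assumes "1 \<le> t"
  shows "PIdl\<^bsub>P\<^esub> (monom P \<one> t) \<subseteq> a_kernel P R (\<lambda>p. coeff P p 0)"
  using assms unfolding cgenideal_def a_kernel_def' by auto

lemma (in UP_cring) coeff_0_eq_zero_imp_in_cgenideal_X:
  assumes p: "p \<in> carrier P" and p0: "coeff P p 0 = \<zero>"
  shows "p \<in> PIdl\<^bsub>P\<^esub> (monom P \<one> 1)"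
proof -
  define q where "q = (\<lambda>n. p (Suc n))"
  have "p \<in> up R" using p by (simp add: P_def UP_def)
  then obtain m where "bound \<zero> m p" by auto
  then have "bound \<zero> m q" unfolding q_def bound_def by auto
  then have q_up: "q \<in> up R" using \<open>p \<in> up R\<close> unfolding q_def by auto
  then have q: "q \<in> carrier P" by (simp add: P_def UP_def)
  have "p = monom P \<one> 1 \<otimes>\<^bsub>P\<^esub> q"
  proof (rule up_eqI)
    fix n
    show "coeff P p n = coeff P (monom P \<one> 1 \<otimes>\<^bsub>P\<^esub> q) n"
    proof (cases n)
      case 0
      then show ?thesis using p0 q by simp
    next
      case (Suc k)
      have "coeff P p n = coeff P q k"
        using Suc \<open>p \<in> up R\<close> q_up by (simp add: q_def P_def UP_def)
      also have "\<dots> = coeff P (monom P \<one> 1 \<otimes>\<^bsub>P\<^esub> q) n"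
        using coeff_monom_mult[OF R.one_closed q, of 1 k] q Suc by simp
      finally show ?thesis .
    qed
  qed (use p q in simp_all)
  then show ?thesis using q unfolding cgenideal_def by (auto simp: m_comm)
qed

definition UP_map :: "('a \<Rightarrow> 'c) \<Rightarrow> (nat \<Rightarrow> 'a) \<Rightarrow> nat \<Rightarrow> 'c" where
  "UP_map h p = h \<circ> p"

lemma (in ring_hom_cring) UP_map_closed:
  assumes p: "p \<in> carrier (UP R)"
  shows "UP_map h p \<in> carrier (UP S)"
proof (rule UP_carrier_if_vanishes_with[OF p])
  show "UP_map h p n \<in> carrier S" for n using p by (auto simp: UP_map_def UP_def)
  show "p n = \<zero>\<^bsub>R\<^esub> \<Longrightarrow> UP_map h p n = \<zero>\<^bsub>S\<^esub>" for n by (simp add: UP_map_def)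
qed

lemma (in ring_hom_cring) coeff_UP_map:
  "p \<in> carrier (UP R) \<Longrightarrow> coeff (UP S) (UP_map h p) n = h (coeff (UP R) p n)"
  using UP_map_closed by (simp add: UP_map_def UP_def)

lemma (in ring_hom_cring) UP_map_ring_hom: "UP_map h \<in> ring_hom (UP R) (UP S)"
proof -
  interpret RP: UP_cring R "UP R" by (simp add: UP_cring_def R.cring_axioms)
  interpret SP: UP_cring S "UP S" by (simp add: UP_cring_def S.cring_axioms)
  show ?thesis
  proof (rule ring_hom_memI)
    fix p q assume p: "p \<in> carrier (UP R)" and q: "q \<in> carrier (UP R)"
    show "UP_map h (p \<otimes>\<^bsub>UP R\<^esub> q) = UP_map h p \<otimes>\<^bsub>UP S\<^esub> UP_map h q"
    proof (rule SP.up_eqI)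
      fix n
      have "coeff (UP S) (UP_map h (p \<otimes>\<^bsub>UP R\<^esub> q)) n
          = h (\<Oplus>\<^bsub>R\<^esub>i\<in>{..n}. coeff (UP R) p i \<otimes>\<^bsub>R\<^esub> coeff (UP R) q (n - i))"
        using p q by (simp add: coeff_UP_map)
      also have "\<dots> = (\<Oplus>\<^bsub>S\<^esub>i\<in>{..n}. h (coeff (UP R) p i) \<otimes>\<^bsub>S\<^esub> h (coeff (UP R) q (n - i)))"
        using p q by (simp add: hom_finsum Pi_def comp_def)
      also have "\<dots> = coeff (UP S) (UP_map h p \<otimes>\<^bsub>UP S\<^esub> UP_map h q) n"
        using p q by (simp add: coeff_UP_map UP_map_closed)
      finally show "coeff (UP S) (UP_map h (p \<otimes>\<^bsub>UP R\<^esub> q)) n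
          = coeff (UP S) (UP_map h p \<otimes>\<^bsub>UP S\<^esub> UP_map h q) n" .
    qed (use p q in \<open>simp_all add: UP_map_closed\<close>)
    show "UP_map h (p \<oplus>\<^bsub>UP R\<^esub> q) = UP_map h p \<oplus>\<^bsub>UP S\<^esub> UP_map h q"
      by (rule SP.up_eqI) (use p q in \<open>simp_all add: UP_map_closed coeff_UP_map\<close>)
  next
    show "UP_map h \<one>\<^bsub>UP R\<^esub> = \<one>\<^bsub>UP S\<^esub>"
      by (rule SP.up_eqI) (simp_all add: UP_map_closed coeff_UP_map)
  qed (rule UP_map_closed)
qed

lemma (in ring_hom_cring) UP_map_surj:
  assumes surj: "h ` carrier R = carrier S"
  shows "UP_map h ` carrier (UP R) = carrier (UP S)"
proof
  show "UP_map h ` carrier (UP R) \<subseteq> carrier (UP S)" using UP_map_closed by blast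
  show "carrier (UP S) \<subseteq> UP_map h ` carrier (UP R)"
  proof
    fix g assume g: "g \<in> carrier (UP S)"
    have "g n \<in> h ` carrier R" for n using g surj by (auto simp: UP_def)
    then have "\<exists>c\<in>carrier R. h c = g n" for n by (metis imageE)
    then obtain f where f: "f \<in> carrier (UP R)" and "\<forall>n. h (f n) = g n"
      using UP_coeffwise_choice[OF R.ring_axioms g, of "\<lambda>n c. h c = g n"] by auto
    then have "UP_map h f = g" unfolding UP_map_def by auto
    then show "g \<in> UP_map h ` carrier (UP R)" using f by blast
  qed
qed

lemma (in ring_hom_cring) UP_map_kernel:
  assumes u: "u \<in> carrier R" and ker: "a_kernel R S h \<subseteq> PIdl\<^bsub>R\<^esub> u"
  shows "a_kernel (UP R) (UP S) (UP_map h) \<subseteq> PIdl\<^bsub>UP R\<^esub> (monom (UP R) u 0)"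
proof
  interpret RP: UP_cring R "UP R" by (simp add: UP_cring_def R.cring_axioms)
  fix f assume "f \<in> a_kernel (UP R) (UP S) (UP_map h)"
  then have f: "f \<in> carrier (UP R)" and f0: "UP_map h f = \<zero>\<^bsub>UP S\<^esub>"
    unfolding a_kernel_def' by auto
  have "f n \<in> PIdl\<^bsub>R\<^esub> u" for n
    using ker fun_cong[OF f0, of n] f unfolding a_kernel_def'
    by (auto simp: UP_map_def UP_def)
  then have "\<exists>d\<in>carrier R. f n = d \<otimes>\<^bsub>R\<^esub> u" for n unfolding cgenideal_def by blast
  then obtain d where d: "d \<in> carrier (UP R)" and fd: "\<forall>n. f n = d n \<otimes>\<^bsub>R\<^esub> u"
    using UP_coeffwise_choice[OF R.ring_axioms f, of "\<lambda>n c. f n = c \<otimes>\<^bsub>R\<^esub> u"] u by auto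
  have "d \<otimes>\<^bsub>UP R\<^esub> monom (UP R) u 0 = u \<odot>\<^bsub>UP R\<^esub> d"
    using d u by (simp add: RP.m_comm[OF d] RP.monom_mult_is_smult)
  also have "\<dots> = f"
  proof (rule RP.up_eqI)
    fix n
    have "d n \<in> carrier R" using d by (auto simp: UP_def)
    then show "coeff (UP R) (u \<odot>\<^bsub>UP R\<^esub> d) n = coeff (UP R) f n"
      using d u f fd by (simp add: coeff_UP_apply[OF d] coeff_UP_apply[OF f] R.m_comm)
  qed (use d u f in simp_all)
  finally have "f = d \<otimes>\<^bsub>UP R\<^esub> monom (UP R) u 0" ..
  then show "f \<in> PIdl\<^bsub>UP R\<^esub> (monom (UP R) u 0)" using d unfolding cgenideal_def by blast
qed

lemma Rt_cring:
  assumes "cring K"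
  shows "cring (Rt K t)"
proof -
  interpret UP_cring K "UP K" by (simp add: UP_cring_def assms)
  show ?thesis
    unfolding Rt_def by (rule ideal.quotient_is_cring[OF cgenideal_ideal]) (simp_all add: UP_cring)
qed

lemma u_Rt_closed:
  assumes "cring K"
  shows "u_Rt K t \<in> carrier (Rt K t)"
proof -
  interpret UP_cring K "UP K" by (simp add: UP_cring_def assms)
  show ?thesis unfolding u_Rt_def Rt_def FactRing_def A_RCOSETS_def' by auto
qed

(* Well defined only for t \<ge> 1, when every element of the ideal (u^t) has constant term zero. *)
definition Rt_eval_zero :: "('a, 'b) ring_scheme \<Rightarrow> (nat \<Rightarrow> 'a) set \<Rightarrow> 'a" where
  "Rt_eval_zero K X = the_elem ((\<lambda>p. coeff (UP K) p 0) ` X)"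

lemma Rt_eval_zero_rcos:
  assumes K: "cring K" and t: "1 \<le> t" and p: "p \<in> carrier (UP K)"
  shows "Rt_eval_zero K (PIdl\<^bsub>UP K\<^esub> (monom (UP K) \<one>\<^bsub>K\<^esub> t) +>\<^bsub>UP K\<^esub> p) = coeff (UP K) p 0"
proof -
  interpret UP_cring K "UP K" by (simp add: UP_cring_def K)
  interpret c0: ring_hom_ring "UP K" K "\<lambda>p. coeff (UP K) p 0" by (rule coeff_0_ring_hom_ring)
  show ?thesis
    unfolding Rt_eval_zero_def
    by (rule c0.the_elem_image_rcos[OF cgenideal_ideal cgenideal_X_pow_subset_kernel_coeff_0[OF t] p])
      simp
qed

lemma Rt_eval_zero_ring_hom:
  assumes K: "cring K" and t: "1 \<le> t"
  shows "Rt_eval_zero K \<in> ring_hom (Rt K t) K"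
proof -
  interpret UP_cring K "UP K" by (simp add: UP_cring_def K)
  interpret c0: ring_hom_ring "UP K" K "\<lambda>p. coeff (UP K) p 0" by (rule coeff_0_ring_hom_ring)
  show ?thesis
    unfolding Rt_eval_zero_def[abs_def] Rt_def
    by (rule c0.the_elem_image_ring_hom[OF cgenideal_ideal cgenideal_X_pow_subset_kernel_coeff_0[OF t]])
      simp
qed

lemma Rt_eval_zero_surj:
  assumes K: "cring K" and t: "1 \<le> t"
  shows "Rt_eval_zero K ` carrier (Rt K t) = carrier K"
proof
  show "Rt_eval_zero K ` carrier (Rt K t) \<subseteq> carrier K"
    using ring_hom_closed[OF Rt_eval_zero_ring_hom[OF K t]] by blast
  interpret UP_cring K "UP K" by (simp add: UP_cring_def K)
  show "carrier K \<subseteq> Rt_eval_zero K ` carrier (Rt K t)"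
  proof
    fix c assume c: "c \<in> carrier K"
    let ?C = "PIdl\<^bsub>UP K\<^esub> (monom (UP K) \<one>\<^bsub>K\<^esub> t) +>\<^bsub>UP K\<^esub> monom (UP K) c 0"
    have "?C \<in> carrier (Rt K t)"
      using c unfolding Rt_def FactRing_def A_RCOSETS_def' by auto
    moreover have "Rt_eval_zero K ?C = c"
      using Rt_eval_zero_rcos[OF K t] c by simp
    ultimately show "c \<in> Rt_eval_zero K ` carrier (Rt K t)" by force
  qed
qed

lemma Rt_eval_zero_kernel:
  assumes K: "cring K" and t: "1 \<le> t"
  shows "a_kernel (Rt K t) K (Rt_eval_zero K) \<subseteq> PIdl\<^bsub>Rt K t\<^esub> (u_Rt K t)"
proof
  interpret UP_cring K "UP K" by (simp add: UP_cring_def K)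
  define N where "N = PIdl\<^bsub>UP K\<^esub> (monom (UP K) \<one>\<^bsub>K\<^esub> t)"
  interpret N: ideal N "UP K" unfolding N_def by (rule cgenideal_ideal) simp
  interpret \<pi>: ring_hom_ring "UP K" "Rt K t" "(+>\<^bsub>UP K\<^esub>) N"
    unfolding Rt_def N_def[symmetric] by (rule N.rcos_ring_hom_ring)
  fix X assume "X \<in> a_kernel (Rt K t) K (Rt_eval_zero K)"
  then obtain p where p: "p \<in> carrier (UP K)" and X: "X = N +>\<^bsub>UP K\<^esub> p"
    and "Rt_eval_zero K X = \<zero>\<^bsub>K\<^esub>"
    unfolding a_kernel_def' Rt_def N_def[symmetric] FactRing_def A_RCOSETS_def' by auto
  then have "coeff (UP K) p 0 = \<zero>\<^bsub>K\<^esub>"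
    using Rt_eval_zero_rcos[OF K t p] unfolding N_def by simp
  then obtain y where y: "y \<in> carrier (UP K)" and "p = y \<otimes>\<^bsub>UP K\<^esub> monom (UP K) \<one>\<^bsub>K\<^esub> 1"
    using coeff_0_eq_zero_imp_in_cgenideal_X[OF p] unfolding cgenideal_def by blast
  then have "X = (N +>\<^bsub>UP K\<^esub> y) \<otimes>\<^bsub>Rt K t\<^esub> u_Rt K t"
    unfolding X u_Rt_def N_def[symmetric] by simp
  moreover have "N +>\<^bsub>UP K\<^esub> y \<in> carrier (Rt K t)" using y by simp
  ultimately show "X \<in> PIdl\<^bsub>Rt K t\<^esub> (u_Rt K t)" unfolding cgenideal_def by blast
qed

lemma UP_Rt_principal_mod:
  assumes K: "field K" and t: "1 \<le> t" and J: "ideal J (UP (Rt K t))"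
  shows "principal_mod (UP (Rt K t)) (monom (UP (Rt K t)) (u_Rt K t) 0) J"
proof -
  have Kc: "cring K" using K by (rule fieldE(1))
  interpret \<epsilon>: ring_hom_cring "Rt K t" K "Rt_eval_zero K"
    by (rule ring_hom_cringI[OF Rt_cring[OF Kc] Kc Rt_eval_zero_ring_hom[OF Kc t]])
  interpret \<Phi>: ring_hom_cring "UP (Rt K t)" "UP K" "UP_map (Rt_eval_zero K)"
    by (rule ring_hom_cringI[OF UP_cring.UP_cring UP_cring.UP_cring \<epsilon>.UP_map_ring_hom])
      (simp_all add: UP_cring_def Kc Rt_cring)
  show ?thesis
    by (rule \<Phi>.principal_mod_if_principal_image[OF \<epsilon>.UP_map_surj[OF Rt_eval_zero_surj[OF Kc t]]
        UP_field_principalideal[OF K]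
        \<epsilon>.UP_map_kernel[OF u_Rt_closed[OF Kc] Rt_eval_zero_kernel[OF Kc t]] J])
qed

theorem corollary2p4:
  fixes K :: "('a, 'b) ring_scheme" and p m t :: nat
    and \<omega> :: "nat \<Rightarrow> (nat \<Rightarrow> 'a) set"
    and I :: "(nat \<Rightarrow> (nat \<Rightarrow> 'a) set) set set"
  assumes "prime p" and "m \<ge> 1" and "t \<ge> 1"
    and "field K" and "finite (carrier K)" and "card (carrier K) = p ^ m"
    and "\<omega> \<in> carrier (UP (Rt K t))"
    and "ideal I (Rtw K t \<omega>)"
  shows "\<exists>a\<in>I. I = (PIdl\<^bsub>Rtw K t \<omega>\<^esub> a) <+>\<^bsub>Rtw K t \<omega>\<^esub>
           {u_Rtw K t \<omega> \<otimes>\<^bsub>Rtw K t \<omega>\<^esub> y | y. y \<in> colon_ideal (Rtw K t \<omega>) I (u_Rtw K t \<omega>)}"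
proof -
  note \<omega> = \<open>\<omega> \<in> carrier (UP (Rt K t))\<close> and I = \<open>ideal I (Rtw K t \<omega>)\<close>
  let ?P = "UP (Rt K t)"
  have K: "cring K" using \<open>field K\<close> by (rule fieldE(1))
  interpret P: UP_cring "Rt K t" ?P by (simp add: UP_cring_def Rt_cring[OF K])
  interpret W: ideal "PIdl\<^bsub>?P\<^esub> \<omega>" ?P by (rule P.cgenideal_ideal[OF \<omega>])
  interpret \<rho>: ring_hom_cring ?P "Rtw K t \<omega>" "(+>\<^bsub>?P\<^esub>) (PIdl\<^bsub>?P\<^esub> \<omega>)"
    unfolding Rtw_def by (rule W.rcos_ring_hom_cring[OF P.UP_cring])
  have \<rho>_surj: "(+>\<^bsub>?P\<^esub>) (PIdl\<^bsub>?P\<^esub> \<omega>) ` carrier ?P = carrier (Rtw K t \<omega>)"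
    unfolding Rtw_def FactRing_def A_RCOSETS_def' by auto
  have u: "monom ?P (u_Rt K t) 0 \<in> carrier ?P" using u_Rt_closed[OF K] by simp
  have "principal_mod (Rtw K t \<omega>) (u_Rtw K t \<omega>) I"
    using \<rho>.principal_mod_image[OF \<rho>_surj u I
        UP_Rt_principal_mod[OF \<open>field K\<close> \<open>t \<ge> 1\<close> \<rho>.ring.ideal_vimage[OF I]]]
    unfolding u_Rtw_def .
  then show ?thesis
    unfolding u_Rtw_def by (rule \<rho>.S.principal_mod_colon_decomposition[OF I \<rho>.hom_closed[OF u]])
qed

end
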